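(* Fix $n\ge 1$ and vectors $\mathbf v_0,\dots,\mathbf v_{n+1}\in\mathbb R^d$. For every choice of arc-hybrid scoring functions $g_{\mathsf{sh}},g_{\mathsf{re}_\curvearrowright},g_{\mathsf{re}_\curvearrowleft}:\mathbb R^d\times\mathbb R^d\to\mathbb R$ there exist arc-eager scoring functions $f_{\mathsf{sh}},f_{\mathsf{re}_\curvearrowleft},f_{\mathsf{ra}},f_{\mathsf{re}}$ (which may be taken with $f_{\mathsf{sh}}=f_{\mathsf{ra}}$) such that every dependency tree on $w_0,\dots,w_n$ receives the same score under the arc-eager model as under the arc-hybrid model. (That is, the arc-eager model contains the arc-hybrid model.)
   Context: Sentence $w_1,\dots,w_n$ with $w_0=\mathrm{ROOT}$ and $w_{n+1}$ an end-of-sentence marker; each position $i$ has a fixed feature vector $\mathbf v_i\in\mathbb R^d$. A dependency tree is a set of arcs $(h,m)$ (head $h$, modifier $m$). Arc-hybrid deduction system (items $[i,j]$, $0\le i<j\le n+1$, with scores). Axiom $[0,1]:0$. Rules: - sh: from $[i,j]:v$ with $j\le n$ derive $[j,j+1]:0$. - $\mathsf{re}_\curvearrowright$: from $[k,i]:v_1$ and $[i,j]:v_2$ derive $[k,j]:v_1+v_2+g_{\mathsf{sh}}(\mathbf v_k,\mathbf v_i)+g_{\mathsf{re}_\curvearrowright}(\mathbf v_i,\mathbf v_j)$, adding arc $(k,i)$. - $\mathsf{re}_\curvearrowleft$: from $[k,i]:v_1$ and $[i,j]:v_2$ derive $[k,j]:v_1+v_2+g_{\mathsf{sh}}(\mathbf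 v_k,\mathbf v_i)+g_{\mathsf{re}_\curvearrowleft}(\mathbf v_i,\mathbf v_j)$, adding arc $(j,i)$. Goal $[0,n+1]$. Arc-eager deduction system (items $[i^b,j]$, $b\in\{0,1\}$, with scores). Axiom $[0^0,1]:0$. Rules: - sh: from $[i^b,j]:v$ with $j\le n$ derive $[j^0,j+1]:0$. - ra: from $[i^b,j]:v$ with $j\le n$ derive $[j^1,j+1]:0$. - $\mathsf{re}_\curvearrowleft$: from $[k^b,i]:v_1$ and $[i^0,j]:v_2$ derive $[k^b,j]:v_1+v_2+f_{\mathsf{sh}}(\mathbf v_k,\mathbf v_i)+f_{\mathsf{re}_\curvearrowleft}(\mathbf v_i,\mathbf v_j)$, adding arc $(j,i)$. - re: from $[k^b,i]:v_1$ and $[i^1,j]:v_2$ derive $[k^b,j]:v_1+v_2+f_{\mathsf{ra}}(\mathbf v_k,\mathbf v_i)+f_{\mathsf{re}}(\mathbf v_i,\mathbf v_j)$, adding arc $(k,i)$. Goal $[0^0,n+1]$. In each system, a derivation of the goal encodes the tree formed by all arcs added by its reduce applications, and its score is the goal item's score. The score of a tree under a model is the maximum score over goal derivations encoding it ($-\infty$ if there is none). *)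

theory Defs
  imports "HOL-Analysis.Finite_Cartesian_Product" "HOL-Library.Extended_Real"
begin

type_synonym arc = "nat \<times> nat"  (* (head, modifier) *)

text \<open>Arc-hybrid deduction system. hybrid n v gsh grr grl i j A s means:
  there is a derivation of item [i,j] with score s whose reduce applications
  add exactly the arcs in A. (grr = g for re-right-arrow, grl = g for re-left-arrow.)\<close>
inductive hybrid ::
  "nat \<Rightarrow> (nat \<Rightarrow> 'v) \<Rightarrow> ('v \<Rightarrow> 'v \<Rightarrow> real) \<Rightarrow> ('v \<Rightarrow> 'v \<Rightarrow> real) \<Rightarrow> ('v \<Rightarrow> 'v \<Rightarrow> real)
    \<Rightarrow> nat \<Rightarrow> nat \<Rightarrow> arc set \<Rightarrow> real \<Rightarrow> bool"
  for n v gsh grr grl where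
  h_ax: "hybrid n v gsh grr grl 0 1 {} 0"
| h_sh: "hybrid n v gsh grr grl i j A s \<Longrightarrow> j \<le> n \<Longrightarrow> hybrid n v gsh grr grl j (Suc j) A 0"
| h_rr: "hybrid n v gsh grr grl k i A1 s1 \<Longrightarrow> hybrid n v gsh grr grl i j A2 s2 \<Longrightarrow>
          hybrid n v gsh grr grl k j (insert (k, i) (A1 \<union> A2))
            (s1 + s2 + gsh (v k) (v i) + grr (v i) (v j))"
| h_rl: "hybrid n v gsh grr grl k i A1 s1 \<Longrightarrow> hybrid n v gsh grr grl i j A2 s2 \<Longrightarrow>
          hybrid n v gsh grr grl k j (insert (j, i) (A1 \<union> A2))
            (s1 + s2 + gsh (v k) (v i) + grl (v i) (v j))"

text \<open>Arc-eager deduction system; the bit b of item [i^b,j] is a bool (True = 1).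
  frl = f for re-left-arrow, fra = f for ra, fre = f for re.\<close>
inductive eager ::
  "nat \<Rightarrow> (nat \<Rightarrow> 'v) \<Rightarrow> ('v \<Rightarrow> 'v \<Rightarrow> real) \<Rightarrow> ('v \<Rightarrow> 'v \<Rightarrow> real) \<Rightarrow> ('v \<Rightarrow> 'v \<Rightarrow> real)
    \<Rightarrow> ('v \<Rightarrow> 'v \<Rightarrow> real) \<Rightarrow> nat \<Rightarrow> bool \<Rightarrow> nat \<Rightarrow> arc set \<Rightarrow> real \<Rightarrow> bool"
  for n v fsh frl fra fre where
  e_ax: "eager n v fsh frl fra fre 0 False 1 {} 0"
| e_sh: "eager n v fsh frl fra fre i b j A s \<Longrightarrow> j \<le> n \<Longrightarrow> eager n v fsh frl fra fre j False (Suc j) A 0"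
| e_ra: "eager n v fsh frl fra fre i b j A s \<Longrightarrow> j \<le> n \<Longrightarrow> eager n v fsh frl fra fre j True (Suc j) A 0"
| e_rl: "eager n v fsh frl fra fre k b i A1 s1 \<Longrightarrow> eager n v fsh frl fra fre i False j A2 s2 \<Longrightarrow>
          eager n v fsh frl fra fre k b j (insert (j, i) (A1 \<union> A2))
            (s1 + s2 + fsh (v k) (v i) + frl (v i) (v j))"
| e_re: "eager n v fsh frl fra fre k b i A1 s1 \<Longrightarrow> eager n v fsh frl fra fre i True j A2 s2 \<Longrightarrow>
          eager n v fsh frl fra fre k b j (insert (k, i) (A1 \<union> A2))
            (s1 + s2 + fra (v k) (v i) + fre (v i) (v j))"

text \<open>Score of a tree: maximum over goal derivations encoding it (Sup {} = -\<infinity>).\<close>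
definition hybrid_score where
  "hybrid_score n v gsh grr grl T =
     Sup {ereal s | s. hybrid n v gsh grr grl 0 (Suc n) T s}"

definition eager_score where
  "eager_score n v fsh frl fra fre T =
     Sup {ereal s | s. eager n v fsh frl fra fre 0 False (Suc n) T s}"

text \<open>Dependency tree on w_0 = ROOT, w_1..w_n: every word 1..n has exactly one
  head among 0..n, and the arc relation is acyclic (so all words hang off ROOT).\<close>
definition dep_tree :: "nat \<Rightarrow> arc set \<Rightarrow> bool" where
  "dep_tree n T \<longleftrightarrow> T \<subseteq> {0..n} \<times> {1..n} \<and> (\<forall>m\<in>{1..n}. \<exists>!h. (h, m) \<in> T) \<and> acyclic T"

end

theory Submission
  imports Defs
begin

text \<open>Take \<open>f\<^sub>s\<^sub>h = f\<^sub>r\<^sub>a = g\<^sub>s\<^sub>h\<close>, \<open>f\<^sub>r\<^sub>e\<^sub>\<curvearrowleft> = g\<^sub>r\<^sub>e\<^sub>\<curvearrowleft>\<close> and \<open>f\<^sub>r\<^sub>e = g\<^sub>r\<^sub>e\<^sub>\<curvearrowright>\<close>.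
  Erasing the bits turns every arc-eager derivation into an arc-hybrid derivation with the
  same arcs and score. Conversely, an arc-hybrid derivation of \<open>[i,j]\<close> yields arc-eager
  derivations of \<open>[i\<^sup>0,j]\<close> and, when \<open>i > 0\<close>, of \<open>[i\<^sup>1,j]\<close>: the bit of an item is chosen
  by its creating shift (\<open>sh\<close> or \<open>ra\<close>), and the right premise of a \<open>re\<^sub>\<curvearrowright>\<close> step never
  starts at \<open>0\<close>.\<close>

lemma hybrid_left_less_right: "hybrid n v gsh grr grl i j A s \<Longrightarrow> i < j"
  by (induction rule: hybrid.induct) auto

lemma eager_imp_hybrid:
  "eager n v gsh grl gsh grr i b j A s \<Longrightarrow> hybrid n v gsh grr grl i j A s"
  by (induction rule: eager.induct) (auto intro: hybrid.intros simp: hybrid.h_ax[simplified])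

lemma hybrid_imp_eager:
  assumes "hybrid n v gsh grr grl i j A s" and "b \<longrightarrow> 0 < i"
  shows "eager n v gsh grl gsh grr i b j A s"
  using assms
proof (induction arbitrary: b rule: hybrid.induct)
  case h_ax
  then show ?case using eager.e_ax by (simp add: One_nat_def)
next
  case (h_sh i j A s)
  have "eager n v gsh grl gsh grr i False j A s" using h_sh.IH[of False] by simp
  with h_sh show ?case by (cases b) (auto intro: eager.e_sh eager.e_ra)
next
  case (h_rr k i A1 s1 j A2 s2)
  have "0 < i" using hybrid_left_less_right[OF h_rr(1)] by simp
  then have "eager n v gsh grl gsh grr i True j A2 s2" using h_rr.IH(2)[of True] by simp
  moreover have "eager n v gsh grl gsh grr k b i A1 s1" using h_rr.IH(1) h_rr.prems .
  ultimately show ?case by (rule eager.e_re[rotated])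
next
  case (h_rl k i A1 s1 j A2 s2)
  have "eager n v gsh grl gsh grr k b i A1 s1" using h_rl.IH(1) h_rl.prems .
  moreover have "eager n v gsh grl gsh grr i False j A2 s2" using h_rl.IH(2)[of False] by simp
  ultimately show ?case by (rule eager.e_rl)
qed

lemma eager_score_eq_hybrid_score:
  "eager_score n v gsh grl gsh grr T = hybrid_score n v gsh grr grl T"
proof -
  have "eager n v gsh grl gsh grr 0 False (Suc n) T s \<longleftrightarrow> hybrid n v gsh grr grl 0 (Suc n) T s"
    for s
    using eager_imp_hybrid hybrid_imp_eager[where b = False] by auto
  then show ?thesis
    by (simp add: eager_score_def hybrid_score_def)
qed

text \<open>The scores agree on every arc set.\<close>

theorem lemma2:
  fixes n :: nat and v :: "nat \<Rightarrow> real ^ 'd"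
  assumes "n \<ge> 1"
  shows "\<forall>gsh grr grl :: real ^ 'd \<Rightarrow> real ^ 'd \<Rightarrow> real.
           \<exists>fsh frl fra fre :: real ^ 'd \<Rightarrow> real ^ 'd \<Rightarrow> real.
             fsh = fra \<and>
             (\<forall>T. dep_tree n T \<longrightarrow>
                  eager_score n v fsh frl fra fre T = hybrid_score n v gsh grr grl T)"
proof (intro allI)
  fix gsh grr grl :: "real ^ 'd \<Rightarrow> real ^ 'd \<Rightarrow> real"
  show "\<exists>fsh frl fra fre :: real ^ 'd \<Rightarrow> real ^ 'd \<Rightarrow> real.
          fsh = fra \<and>
          (\<forall>T. dep_tree n T \<longrightarrow>
               eager_score n v fsh frl fra fre T = hybrid_score n v gsh grr grl T)"
    by (intro exI[of _ gsh] exI[of _ grl] exI[of _ gsh] exI[of _ grr])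
       (simp add: eager_score_eq_hybrid_score)
qed

end
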